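(* Let $q$ be a prime power, let $\mathcal{F}=(\mathcal{F}_1,\ldots,\mathcal{F}_r)$ be a flag on $\mathbb{F}_{q^n}$ whose best friend is the subfield $\mathbb{F}_{q^m}$, and let $\beta\in\mathbb{F}_{q^n}^*$. For $1\le i\le r$ let $\mathbb{F}_{q^{m_i}}$ denote the best friend of $\mathcal{F}_i$. Then $\mathrm{Orb}_\beta(\mathcal{F})$ is disjoint if and only if $$\langle\beta\rangle\cap\mathbb{F}_{q^m}^*=\langle\beta\rangle\cap\mathbb{F}_{q^{m_1}}^*=\cdots=\langle\beta\rangle\cap\mathbb{F}_{q^{m_r}}^*.$$ In particular, the cyclic orbit flag code $\mathrm{Orb}(\mathcal{F})$ is disjoint if and only if all the subspaces $\mathcal{F}_1,\ldots,\mathcal{F}_r$ have $\mathbb{F}_{q^m}$ as their best friend.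
   Context: A flag on $\mathbb{F}_{q^n}$ is a sequence $(\mathcal{F}_1,\ldots,\mathcal{F}_r)$ of $\mathbb{F}_q$-subspaces with $\{0\}\subsetneq\mathcal{F}_1\subsetneq\cdots\subsetneq\mathcal{F}_r\subsetneq\mathbb{F}_{q^n}$. For $\gamma\in\mathbb{F}_{q^n}^*$, $\mathcal{U}\gamma=\{u\gamma:u\in\mathcal{U}\}$, $\mathcal{F}\gamma=(\mathcal{F}_1\gamma,\ldots,\mathcal{F}_r\gamma)$; $\mathrm{Orb}_\beta(\mathcal{F})=\{\mathcal{F}\beta^j:0\le j\le|\beta|-1\}$ with $|\beta|$ the multiplicative order, and $\mathrm{Orb}(\mathcal{F})=\{\mathcal{F}\gamma:\gamma\in\mathbb{F}_{q^n}^*\}$. A subfield $\mathbb{F}_{q^k}$ is a friend of a subspace $\mathcal{U}$ if $\mathcal{U}$ is an $\mathbb{F}_{q^k}$-vector space, and a friend of $\mathcal{F}$ if it is a friend of every $\mathcal{F}_i$; the best friend is the largest friend. For a set $\mathcal{C}$ of flags, its $i$-th projected code $\mathcal{C}_i$ is the set of $i$-th subspaces of its flags; $\mathcal{C}$ is disjoint if $|\mathcal{C}_1|=\cdots=|\mathcal{C}_r|=|\mathcal{C}|$. *)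

theory Defs
  imports "HOL-Computational_Algebra.Primes"
begin

(* The ambient field F_{q^n} is a finite field type 'a with CARD('a) = q^n. *)

definition prime_power :: "nat \<Rightarrow> bool" where
  "prime_power q \<longleftrightarrow> (\<exists>p k. prime p \<and> k > 0 \<and> q = p ^ k)"

(* The subfield F_{q^k} of F_{q^n} (for k dvd n): the roots of X^(q^k) - X. *)
definition subfield_set :: "nat \<Rightarrow> nat \<Rightarrow> 'a::field set" where
  "subfield_set q k = {x. x ^ (q ^ k) = x}"

definition is_subspace_over :: "nat \<Rightarrow> nat \<Rightarrow> 'a::field set \<Rightarrow> bool" where
  "is_subspace_over q k U \<longleftrightarrow>
     0 \<in> U \<and> (\<forall>u\<in>U. \<forall>v\<in>U. u + v \<in> U) \<and> (\<forall>u\<in>U. - u \<in> U) \<and>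
     (\<forall>c\<in>subfield_set q k. \<forall>u\<in>U. c * u \<in> U)"

abbreviation Fq_subspace :: "nat \<Rightarrow> 'a::field set \<Rightarrow> bool" where
  "Fq_subspace q U \<equiv> is_subspace_over q 1 U"

definition friend :: "nat \<Rightarrow> nat \<Rightarrow> nat \<Rightarrow> 'a::field set \<Rightarrow> bool" where
  "friend q n k U \<longleftrightarrow> k dvd n \<and> is_subspace_over q k U"

definition best_friend :: "nat \<Rightarrow> nat \<Rightarrow> 'a::field set \<Rightarrow> nat" where
  "best_friend q n U = (GREATEST k. friend q n k U)"

definition is_flag :: "nat \<Rightarrow> 'a::field set list \<Rightarrow> bool" where
  "is_flag q F \<longleftrightarrow> length F \<ge> 1 \<and> (\<forall>i<length F. Fq_subspace q (F ! i)) \<and>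
     {0} \<subset> F ! 0 \<and> (\<forall>i. Suc i < length F \<longrightarrow> F ! i \<subset> F ! Suc i) \<and>
     F ! (length F - 1) \<subset> UNIV"

definition flag_friend :: "nat \<Rightarrow> nat \<Rightarrow> nat \<Rightarrow> 'a::field set list \<Rightarrow> bool" where
  "flag_friend q n k F \<longleftrightarrow> (\<forall>i<length F. friend q n k (F ! i))"

definition flag_best_friend :: "nat \<Rightarrow> nat \<Rightarrow> 'a::field set list \<Rightarrow> nat" where
  "flag_best_friend q n F = (GREATEST k. flag_friend q n k F)"

definition set_mult :: "'a::field set \<Rightarrow> 'a \<Rightarrow> 'a set" where
  "set_mult U g = (\<lambda>u. u * g) ` U"

definition flag_mult :: "'a::field set list \<Rightarrow> 'a \<Rightarrow> 'a set list" where
  "flag_mult F g = map (\<lambda>U. set_mult U g) F"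

definition mult_order :: "'a::field \<Rightarrow> nat" where
  "mult_order b = (LEAST k. k > 0 \<and> b ^ k = 1)"

definition cyclic_subgroup :: "'a::field \<Rightarrow> 'a set" where
  "cyclic_subgroup b = range (\<lambda>j::nat. b ^ j)"

definition Orb_beta :: "'a::field \<Rightarrow> 'a set list \<Rightarrow> 'a set list set" where
  "Orb_beta b F = {flag_mult F (b ^ j) | j. j < mult_order b}"

definition Orb :: "'a::field set list \<Rightarrow> 'a set list set" where
  "Orb F = {flag_mult F g | g. g \<noteq> 0}"

(* i-th projected code (0-based index i < r) *)
definition projected_code :: "'a set list set \<Rightarrow> nat \<Rightarrow> 'a set set" where
  "projected_code C i = (\<lambda>Fl. Fl ! i) ` C"

definition disjoint_code :: "nat \<Rightarrow> 'a set list set \<Rightarrow> bool" where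
  "disjoint_code r C \<longleftrightarrow> (\<forall>i<r. card (projected_code C i) = card C)"

end

theory Submission
  imports Defs "HOL-Computational_Algebra.Polynomial"
begin

(* Multiplying the flag F by g and by h gives the same flag iff g/h stabilizes every F_i, and
   the same i-th subspace iff g/h stabilizes F_i. The multiplicative stabilizer of an
   F_q-subspace U is a subring of F_{q^n} containing F_q; being an F_q-space it has q^d
   elements, so it consists of roots of X^(q^d) - X and equals the subfield F_{q^d}, with
   d dividing n. By the definition of friends this is the best friend of U, and likewise the
   stabilizer of the flag is its best friend F_{q^m}. Hence the orbit of F under a
   multiplicative group G is disjoint iff G meets each F_{q^(m_i)} only inside F_{q^m}; take
   G = <beta> and G = F_{q^n}^*. *)

lemma prime_power_ge_2: "prime_power q \<Longrightarrow> 2 \<le> q"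
proof -
  assume "prime_power q"
  then obtain p k where "prime p" "k > 0" "q = p ^ k"
    unfolding prime_power_def by blast
  then show ?thesis
    using prime_ge_2_nat[of p] self_le_power[of p k] by simp
qed

lemma power_card_eq_one:
  fixes S :: "'a::field set"
  assumes "finite S" "0 \<notin> S" "\<And>x y. x \<in> S \<Longrightarrow> y \<in> S \<Longrightarrow> x * y \<in> S" "t \<in> S"
  shows "t ^ card S = 1"
proof -
  have "t \<noteq> 0" using assms by auto
  then have inj: "inj_on ((*) t) S" by (auto intro: inj_onI)
  then have "(*) t ` S = S" using assms by (intro endo_inj_surj) auto
  then have "(\<Prod>y\<in>S. t * y) = \<Prod>S"
    using prod.reindex[OF inj, of id] by simp
  then have "t ^ card S * \<Prod>S = \<Prod>S" by (simp add: prod.distrib)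
  moreover have "\<Prod>S \<noteq> 0" using assms(1,2) by simp
  ultimately show ?thesis by simp
qed

lemma power_card_eq_self:
  fixes T :: "'a::field set"
  assumes "finite T" "0 \<in> T" "\<And>x y. x \<in> T \<Longrightarrow> y \<in> T \<Longrightarrow> x * y \<in> T" "t \<in> T"
  shows "t ^ card T = t"
proof (cases "t = 0")
  case True
  then show ?thesis using assms(1,2) card_gt_0_iff by fastforce
next
  case False
  have "t ^ card (T - {0}) = 1"
    using False assms by (intro power_card_eq_one) auto
  moreover have "card T = Suc (card (T - {0}))"
    using assms(1,2) by (rule card_Suc_Diff1[symmetric])
  ultimately show ?thesis by simp
qed

lemma CHAR_dvd_card_UNIV: "CHAR('a::{ring_1,finite}) dvd card (UNIV :: 'a set)"
proof -
  have "(\<Sum>y\<in>UNIV. (1::'a) + y) = (\<Sum>y\<in>UNIV. y)"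
    by (rule sum.reindex_bij_witness[of _ "\<lambda>y. y - 1" "\<lambda>y. 1 + y"]) auto
  then have "of_nat (card (UNIV :: 'a set)) = (0::'a)"
    by (simp add: sum.distrib)
  then show ?thesis
    by (simp add: of_nat_eq_0_iff_char_dvd)
qed

lemma power_power_diff_dvd:
  fixes z :: "'a::comm_ring_1"
  shows "z ^ (Q ^ k) - z dvd z ^ (Q ^ (k * j)) - z"
proof (induction j)
  case (Suc j)
  define a where "a = z ^ (Q ^ (k * j))"
  have "z ^ (Q ^ k) - z dvd a - z"
    using Suc.IH by (simp add: a_def)
  also have "a - z dvd a ^ (Q ^ k) - z ^ (Q ^ k)"
    by (simp add: power_diff_sumr2)
  finally have "z ^ (Q ^ k) - z dvd (a ^ (Q ^ k) - z ^ (Q ^ k)) + (z ^ (Q ^ k) - z)"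
    by (rule dvd_add[OF _ dvd_refl])
  moreover have "a ^ (Q ^ k) = z ^ (Q ^ (k * Suc j))"
    by (simp add: a_def power_add mult.commute flip: power_mult)
  ultimately show ?case by simp
qed simp

section \<open>The sets F_{q^k}\<close>

lemma one_mem_subfield_set: "(1::'a::field) \<in> subfield_set q k"
  by (simp add: subfield_set_def)

lemma subfield_set_mult_closed:
  "x \<in> subfield_set q k \<Longrightarrow> y \<in> subfield_set q k \<Longrightarrow> x * y \<in> subfield_set q k"
  by (simp add: subfield_set_def power_mult_distrib)

lemma subfield_set_inverse_closed: "x \<in> subfield_set q k \<Longrightarrow> inverse x \<in> subfield_set q k"
  by (simp add: subfield_set_def power_inverse)

lemma subfield_set_mono:
  assumes "a dvd b"
  shows "subfield_set q a \<subseteq> subfield_set q b"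
proof
  fix x :: 'a assume x: "x \<in> subfield_set q a"
  obtain c where "b = a * c" using assms by blast
  moreover have "x ^ (q ^ (a * c)) = x" for c
  proof (induction c)
    case (Suc c)
    have "q ^ (a * Suc c) = q ^ (a * c) * q ^ a"
      by (simp add: power_add)
    then have "x ^ (q ^ (a * Suc c)) = (x ^ (q ^ (a * c))) ^ (q ^ a)"
      by (simp only: power_mult)
    then show ?case using Suc.IH x by (simp add: subfield_set_def)
  qed simp
  ultimately show "x \<in> subfield_set q b"
    by (simp add: subfield_set_def)
qed

lemma subfield_set_Int: "subfield_set q a \<inter> subfield_set q b = subfield_set q (gcd a b)"
proof
  show "subfield_set q (gcd a b) \<subseteq> subfield_set q a \<inter> subfield_set q b"
    by (simp add: subfield_set_mono)
next
  show "subfield_set q a \<inter> subfield_set q b \<subseteq> subfield_set q (gcd a b)"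
  proof (cases "a = 0")
    case True
    then show ?thesis by simp
  next
    case False
    then obtain u v where uv: "a * u = b * v + gcd a b"
      using bezout_nat by blast
    show ?thesis
    proof
      fix x assume "x \<in> subfield_set q a \<inter> subfield_set q b"
      then have "x ^ (q ^ (a * u)) = x" "x ^ (q ^ (b * v)) = x"
        using subfield_set_mono[of a "a * u" q] subfield_set_mono[of b "b * v" q]
        by (auto simp: subfield_set_def)
      then have "x = (x ^ (q ^ (b * v))) ^ (q ^ gcd a b)"
        by (simp add: uv power_add power_mult)
      then show "x \<in> subfield_set q (gcd a b)"
        using \<open>x ^ (q ^ (b * v)) = x\<close> by (simp add: subfield_set_def)
    qed
  qed
qed

definition subfield_poly :: "nat \<Rightarrow> nat \<Rightarrow> 'a::comm_ring_1 poly" where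
  "subfield_poly q k = [:0, 1:] ^ (q ^ k) - [:0, 1:]"

lemma poly_subfield_poly_eq_0_iff: "poly (subfield_poly q k) x = 0 \<longleftrightarrow> x \<in> subfield_set q k"
  by (simp add: subfield_poly_def subfield_set_def)

lemma subfield_poly_dvd: "a dvd b \<Longrightarrow> subfield_poly q a dvd subfield_poly q b"
  unfolding subfield_poly_def by (auto intro: power_power_diff_dvd)

lemma degree_subfield_poly:
  assumes "1 < q ^ k"
  shows "degree (subfield_poly q k :: 'a::idom poly) = q ^ k"
proof -
  have "subfield_poly q k = [:0, 1:] ^ (q ^ k) + - [:0, 1 :: 'a:]"
    by (simp only: subfield_poly_def diff_conv_add_uminus)
  then show ?thesis
    using assms by (simp only:) (subst degree_add_eq_left, simp_all add: degree_power_eq)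
qed

lemma subfield_poly_nonzero:
  assumes "1 < q ^ k"
  shows "subfield_poly q k \<noteq> (0 :: 'a::idom poly)"
proof
  assume "subfield_poly q k = (0 :: 'a poly)"
  then have "degree (subfield_poly q k :: 'a poly) = 0"
    by simp
  with degree_subfield_poly[OF assms, where 'a='a] assms show False
    by linarith
qed

definition Fq_span_insert :: "nat \<Rightarrow> 'a::field \<Rightarrow> 'a set \<Rightarrow> 'a set" where
  "Fq_span_insert q v W = (\<lambda>(w, c). w + c * v) ` (W \<times> subfield_set q 1)"

lemma Fq_span_insert_iff:
  "x \<in> Fq_span_insert q v W \<longleftrightarrow> (\<exists>w\<in>W. \<exists>c\<in>subfield_set q 1. x = w + c * v)"
  unfolding Fq_span_insert_def by auto

section \<open>Stabilizers and friends\<close>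

(* Unlike the group-theoretic stabilizer it contains 0, which makes it a subfield. *)
definition stabilizer :: "'a::field set \<Rightarrow> 'a set" where
  "stabilizer U = {c. \<forall>u\<in>U. c * u \<in> U}"

definition flag_stabilizer :: "'a::field set list \<Rightarrow> 'a set" where
  "flag_stabilizer F = (\<Inter>U\<in>set F. stabilizer U)"

definition Fq_subalgebra :: "nat \<Rightarrow> 'a::field set \<Rightarrow> bool" where
  "Fq_subalgebra q T \<longleftrightarrow> subfield_set q 1 \<subseteq> T \<and> (\<forall>x\<in>T. \<forall>y\<in>T. x + y \<in> T \<and> x * y \<in> T)"

lemma is_flag_nonempty_subspaces: "is_flag q F \<Longrightarrow> F \<noteq> [] \<and> (\<forall>U\<in>set F. Fq_subspace q U)"
  unfolding is_flag_def by (auto simp: in_set_conv_nth)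

lemma Fq_subalgebra_stabilizer: "Fq_subspace q U \<Longrightarrow> Fq_subalgebra q (stabilizer U)"
  unfolding Fq_subalgebra_def is_subspace_over_def stabilizer_def
  by (auto simp: distrib_right mult.assoc)

lemma Fq_subalgebra_flag_stabilizer:
  "(\<And>U. U \<in> set F \<Longrightarrow> Fq_subspace q U) \<Longrightarrow> Fq_subalgebra q (flag_stabilizer F)"
proof -
  assume "\<And>U. U \<in> set F \<Longrightarrow> Fq_subspace q U"
  then have "\<forall>U\<in>set F. Fq_subalgebra q (stabilizer U)"
    by (simp add: Fq_subalgebra_stabilizer)
  then show ?thesis
    by (auto simp: Fq_subalgebra_def flag_stabilizer_def)
qed

lemma friend_iff_subset_stabilizer:
  "Fq_subspace q U \<Longrightarrow> friend q n k U \<longleftrightarrow> k dvd n \<and> subfield_set q k \<subseteq> stabilizer U"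
  unfolding friend_def is_subspace_over_def stabilizer_def by auto

lemma flag_friend_iff_subset_flag_stabilizer:
  assumes "F \<noteq> []" "\<And>U. U \<in> set F \<Longrightarrow> Fq_subspace q U"
  shows "flag_friend q n k F \<longleftrightarrow> k dvd n \<and> subfield_set q k \<subseteq> flag_stabilizer F"
proof -
  have "flag_friend q n k F \<longleftrightarrow> (\<forall>U\<in>set F. friend q n k U)"
    by (simp add: flag_friend_def all_set_conv_all_nth)
  also have "\<dots> \<longleftrightarrow> (\<forall>U\<in>set F. k dvd n \<and> subfield_set q k \<subseteq> stabilizer U)"
    using friend_iff_subset_stabilizer[OF assms(2)] by simp
  also have "\<dots> \<longleftrightarrow> k dvd n \<and> subfield_set q k \<subseteq> flag_stabilizer F"
    using assms(1) unfolding flag_stabilizer_def by (auto simp: neq_Nil_conv)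
  finally show ?thesis .
qed

section \<open>Orbits of flags\<close>

lemma set_mult_eq_self_iff:
  fixes U :: "'a::field set"
  assumes "finite U" "c \<noteq> 0"
  shows "set_mult U c = U \<longleftrightarrow> c \<in> stabilizer U"
proof
  assume "set_mult U c = U"
  then show "c \<in> stabilizer U"
    unfolding stabilizer_def set_mult_def by (auto simp: mult.commute)
next
  assume "c \<in> stabilizer U"
  then have "(\<lambda>u. u * c) ` U \<subseteq> U"
    unfolding stabilizer_def by (auto simp: mult.commute)
  moreover have "inj_on (\<lambda>u. u * c) U"
    using assms(2) by (auto intro: inj_onI)
  ultimately show "set_mult U c = U"
    unfolding set_mult_def using endo_inj_surj[OF assms(1)] by blast
qed

lemma set_mult_eq_iff:
  fixes U :: "'a::field set"
  assumes "finite U" "g \<noteq> 0" "h \<noteq> 0"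
  shows "set_mult U g = set_mult U h \<longleftrightarrow> g / h \<in> stabilizer U"
proof -
  have mult_mult: "set_mult (set_mult U a) b = set_mult U (a * b)" for a b
    unfolding set_mult_def by (auto simp: image_image mult.assoc)
  have "set_mult U g = set_mult U h \<longleftrightarrow> set_mult U (g / h) = U"
  proof
    assume "set_mult U g = set_mult U h"
    then have "set_mult (set_mult U g) (inverse h) = set_mult (set_mult U h) (inverse h)"
      by simp
    then show "set_mult U (g / h) = U"
      using assms(3) by (simp add: mult_mult divide_inverse) (simp add: set_mult_def)
  next
    assume "set_mult U (g / h) = U"
    then have "set_mult (set_mult U (g / h)) h = set_mult U h"
      by simp
    then show "set_mult U g = set_mult U h"
      using assms(3) by (simp add: mult_mult)
  qed
  also have "\<dots> \<longleftrightarrow> g / h \<in> stabilizer U"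
    using assms by (intro set_mult_eq_self_iff) auto
  finally show ?thesis .
qed

lemma flag_mult_eq_iff:
  fixes F :: "'a::{field,finite} set list"
  assumes "g \<noteq> 0" "h \<noteq> 0"
  shows "flag_mult F g = flag_mult F h \<longleftrightarrow> g / h \<in> flag_stabilizer F"
  using set_mult_eq_iff[OF _ assms]
  by (auto simp: flag_mult_def flag_stabilizer_def list_eq_iff_nth_eq all_set_conv_all_nth)

lemma disjoint_code_flag_mult_image_iff:
  fixes F :: "'a::{field,finite} set list" and G :: "'a set"
  assumes "1 \<in> G" "0 \<notin> G" "\<And>g h. g \<in> G \<Longrightarrow> h \<in> G \<Longrightarrow> g / h \<in> G"
  shows "disjoint_code (length F) (flag_mult F ` G) \<longleftrightarrow>
    (\<forall>i<length F. G \<inter> stabilizer (F ! i) \<subseteq> flag_stabilizer F)"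
proof -
  have inj_iff: "inj_on (\<lambda>Fl. Fl ! i) (flag_mult F ` G) \<longleftrightarrow>
      G \<inter> stabilizer (F ! i) \<subseteq> flag_stabilizer F" if i: "i < length F" for i
  proof -
    have "inj_on (\<lambda>Fl. Fl ! i) (flag_mult F ` G) \<longleftrightarrow>
        (\<forall>g\<in>G. \<forall>h\<in>G. set_mult (F ! i) g = set_mult (F ! i) h \<longrightarrow> flag_mult F g = flag_mult F h)"
      using i by (auto simp: inj_on_def flag_mult_def)
    also have "\<dots> \<longleftrightarrow> (\<forall>g\<in>G. \<forall>h\<in>G. g / h \<in> stabilizer (F ! i) \<longrightarrow> g / h \<in> flag_stabilizer F)"
    proof (intro ball_cong refl)
      fix g h assume "g \<in> G" "h \<in> G"
      with assms(2) have "g \<noteq> 0" "h \<noteq> 0" by auto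
      then show "(set_mult (F ! i) g = set_mult (F ! i) h \<longrightarrow> flag_mult F g = flag_mult F h) \<longleftrightarrow>
          (g / h \<in> stabilizer (F ! i) \<longrightarrow> g / h \<in> flag_stabilizer F)"
        by (simp add: set_mult_eq_iff flag_mult_eq_iff)
    qed
    also have "\<dots> \<longleftrightarrow> G \<inter> stabilizer (F ! i) \<subseteq> flag_stabilizer F"
    proof
      assume "\<forall>g\<in>G. \<forall>h\<in>G. g / h \<in> stabilizer (F ! i) \<longrightarrow> g / h \<in> flag_stabilizer F"
      from this[rule_format, OF _ assms(1)]
      show "G \<inter> stabilizer (F ! i) \<subseteq> flag_stabilizer F" by auto
    next
      assume "G \<inter> stabilizer (F ! i) \<subseteq> flag_stabilizer F"
      then show "\<forall>g\<in>G. \<forall>h\<in>G. g / h \<in> stabilizer (F ! i) \<longrightarrow> g / h \<in> flag_stabilizer F"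
        using assms(3) by blast
    qed
    finally show ?thesis .
  qed
  have "disjoint_code (length F) (flag_mult F ` G) \<longleftrightarrow>
      (\<forall>i<length F. inj_on (\<lambda>Fl. Fl ! i) (flag_mult F ` G))"
    unfolding disjoint_code_def projected_code_def by (simp add: inj_on_iff_eq_card)
  with inj_iff show ?thesis by simp
qed

lemma mult_order_pos_power_eq_one:
  fixes \<beta> :: "'a::{field,finite}"
  assumes "\<beta> \<noteq> 0"
  shows "0 < mult_order \<beta> \<and> \<beta> ^ mult_order \<beta> = 1"
proof -
  have "card {1::'a} \<le> card (UNIV - {0::'a})"
    by (rule card_mono) auto
  then have "0 < card (UNIV - {0::'a})"
    by simp
  moreover have "\<beta> ^ card (UNIV - {0::'a}) = 1"
    using assms by (intro power_card_eq_one) auto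
  ultimately show ?thesis
    unfolding mult_order_def by (rule LeastI[of "\<lambda>k. 0 < k \<and> \<beta> ^ k = 1", OF conjI])
qed

lemma Orb_beta_eq_image_cyclic_subgroup:
  fixes \<beta> :: "'a::{field,finite}"
  assumes "\<beta> \<noteq> 0"
  shows "Orb_beta \<beta> F = flag_mult F ` cyclic_subgroup \<beta>"
proof -
  obtain ord where ord: "ord = mult_order \<beta>" "0 < ord" "\<beta> ^ ord = 1"
    using mult_order_pos_power_eq_one[OF assms] by blast
  have pow_mod: "\<beta> ^ j = \<beta> ^ (j mod ord)" for j
  proof -
    have "\<beta> ^ j = \<beta> ^ (ord * (j div ord) + j mod ord)"
      by simp
    also have "\<dots> = (\<beta> ^ ord) ^ (j div ord) * \<beta> ^ (j mod ord)"
      by (simp only: power_add power_mult)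
    finally show ?thesis using ord(3) by simp
  qed
  have "cyclic_subgroup \<beta> = (\<lambda>j. \<beta> ^ j) ` {..<ord}"
  proof
    show "cyclic_subgroup \<beta> \<subseteq> (\<lambda>j. \<beta> ^ j) ` {..<ord}"
    proof
      fix x assume "x \<in> cyclic_subgroup \<beta>"
      then obtain j where "x = \<beta> ^ j"
        unfolding cyclic_subgroup_def by auto
      then show "x \<in> (\<lambda>j. \<beta> ^ j) ` {..<ord}"
        using pow_mod[of j] ord(2) by (intro image_eqI[of _ _ "j mod ord"]) auto
    qed
  qed (auto simp: cyclic_subgroup_def)
  then show ?thesis
    unfolding Orb_beta_def ord(1) by auto
qed

lemma cyclic_subgroup_divide:
  fixes \<beta> :: "'a::{field,finite}"
  assumes "\<beta> \<noteq> 0" "g \<in> cyclic_subgroup \<beta>" "h \<in> cyclic_subgroup \<beta>"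
  shows "g / h \<in> cyclic_subgroup \<beta>"
proof -
  obtain a b where ab: "g = \<beta> ^ a" "h = \<beta> ^ b"
    using assms(2,3) unfolding cyclic_subgroup_def by auto
  define ord where "ord = mult_order \<beta>"
  have ord: "0 < ord" "\<beta> ^ ord = 1"
    using mult_order_pos_power_eq_one[OF assms(1)] by (simp_all add: ord_def)
  have "\<beta> ^ b * \<beta> ^ ((ord - 1) * b) = \<beta> ^ (b + (ord - 1) * b)"
    by (rule power_add [symmetric])
  also have "b + (ord - 1) * b = ord * b"
    using ord(1) by (cases ord) simp_all
  also have "\<beta> ^ (ord * b) = (\<beta> ^ ord) ^ b"
    by (rule power_mult)
  finally have "inverse h = \<beta> ^ ((ord - 1) * b)"
    using ab(2) ord(2) by (simp add: inverse_unique)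
  then have "g / h = \<beta> ^ (a + (ord - 1) * b)"
    using ab(1) by (simp add: divide_inverse power_add)
  then show ?thesis
    unfolding cyclic_subgroup_def by blast
qed

section \<open>Subfields of F_{q^n}\<close>

locale finite_field_qn =
  fixes q n :: nat and field_type :: "'a::{field,finite} itself"
  assumes prime_power_q: "prime_power q"
    and card_UNIV_eq: "card (UNIV :: 'a set) = q ^ n"
begin

(* This is F_{q^k} only for k dvd n; in general it is F_{q^(gcd k n)}. *)
abbreviation Fq :: "nat \<Rightarrow> 'a set" where
  "Fq k \<equiv> subfield_set q k"

lemma q_ge_2: "2 \<le> q"
  using prime_power_q by (rule prime_power_ge_2)

lemma n_pos: "0 < n"
proof (rule ccontr)
  assume "\<not> 0 < n"
  then have "card (UNIV :: 'a set) = 1"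
    using card_UNIV_eq by simp
  moreover have "card {0::'a, 1} \<le> card (UNIV :: 'a set)"
    by (rule card_mono) auto
  ultimately show False
    by simp
qed

lemma q_eq_CHAR_power: "\<exists>e. q = CHAR('a) ^ e"
proof -
  obtain p e where p: "prime p" "q = p ^ e"
    using prime_power_q unfolding prime_power_def by blast
  have CHAR: "prime CHAR('a)"
    by (simp add: finite_imp_CHAR_pos prime_CHAR_semidom)
  have "CHAR('a) dvd p ^ (e * n)"
    using CHAR_dvd_card_UNIV[where 'a='a] card_UNIV_eq p(2) by (simp add: power_mult)
  then have "CHAR('a) dvd p"
    using CHAR prime_dvd_power by blast
  then have "CHAR('a) = p"
    using CHAR p(1) primes_dvd_imp_eq by blast
  with p(2) show ?thesis
    by blast
qed

lemma power_q_power_add: "(x + y) ^ (q ^ k) = x ^ (q ^ k) + (y::'a) ^ (q ^ k)"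
proof -
  obtain e where "q ^ k = CHAR('a) ^ (e * k)"
    using q_eq_CHAR_power by (auto simp: power_mult)
  then show ?thesis
    by (simp add: finite_imp_CHAR_pos prime_CHAR_semidom freshmans_dream')
qed

lemma power_q_power_n: "(x::'a) ^ (q ^ n) = x"
  using power_card_eq_self[of UNIV x] card_UNIV_eq by simp

lemma zero_mem_subfield_set: "0 \<in> Fq k"
  using q_ge_2 by (simp add: subfield_set_def)

lemma subfield_set_add_closed: "x \<in> Fq k \<Longrightarrow> y \<in> Fq k \<Longrightarrow> x + y \<in> Fq k"
  by (simp add: subfield_set_def power_q_power_add)

lemma subfield_set_uminus_closed:
  assumes "x \<in> Fq k"
  shows "- x \<in> Fq k"
proof -
  have "0 = (x + - x) ^ (q ^ k)"
    using q_ge_2 by simp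
  also have "\<dots> = x + (- x) ^ (q ^ k)"
    using assms by (simp only: power_q_power_add) (simp add: subfield_set_def)
  finally show ?thesis
    by (simp add: subfield_set_def add_eq_0_iff)
qed

lemma subfield_set_diff_closed: "x \<in> Fq k \<Longrightarrow> y \<in> Fq k \<Longrightarrow> x - y \<in> Fq k"
  unfolding diff_conv_add_uminus by (intro subfield_set_add_closed subfield_set_uminus_closed)

lemma subfield_set_n: "Fq n = UNIV"
  by (simp add: subfield_set_def power_q_power_n)

lemma one_less_q_power: "0 < k \<Longrightarrow> 1 < q ^ k"
  using q_ge_2 by (intro one_less_power) auto

lemma card_subfield_set_le:
  assumes "0 < k"
  shows "card (Fq k) \<le> q ^ k"
proof -
  have "card {x::'a. poly (subfield_poly q k) x = 0} \<le> degree (subfield_poly q k :: 'a poly)"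
    using one_less_q_power[OF assms] by (intro card_poly_roots_bound subfield_poly_nonzero)
  then show ?thesis
    using one_less_q_power[OF assms] by (simp add: poly_subfield_poly_eq_0_iff degree_subfield_poly)
qed

lemma card_subfield_set:
  assumes "k dvd n"
  shows "card (Fq k) = q ^ k"
proof -
  have "0 < k"
    using assms n_pos by (auto intro: Nat.gr0I)
  obtain S :: "'a poly" where S: "subfield_poly q n = subfield_poly q k * S"
    using subfield_poly_dvd[OF assms] by blast
  have "1 < q ^ k" "1 < q ^ n" "q ^ k \<le> q ^ n"
    using one_less_q_power \<open>0 < k\<close> n_pos q_ge_2 assms by (simp_all add: dvd_imp_le)
  then have "S \<noteq> 0"
    using S subfield_poly_nonzero[of q n, where 'a='a] by auto
  have "degree (subfield_poly q n :: 'a poly) = degree (subfield_poly q k :: 'a poly) + degree S"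
    unfolding S using \<open>S \<noteq> 0\<close> subfield_poly_nonzero[OF \<open>1 < q ^ k\<close>, where 'a='a]
    by (rule degree_mult_eq[rotated])
  then have "q ^ n = q ^ k + degree S"
    by (simp only: degree_subfield_poly[OF \<open>1 < q ^ n\<close>] degree_subfield_poly[OF \<open>1 < q ^ k\<close>])
  then have "degree S = q ^ n - q ^ k"
    by simp
  have "UNIV \<subseteq> Fq k \<union> {x. poly S x = 0}"
  proof
    fix x :: 'a
    have "poly (subfield_poly q n) x = 0"
      by (simp add: poly_subfield_poly_eq_0_iff subfield_set_n)
    then show "x \<in> Fq k \<union> {x. poly S x = 0}"
      by (simp add: S poly_subfield_poly_eq_0_iff)
  qed
  then have "q ^ n \<le> card (Fq k \<union> {x. poly S x = 0})"
    using card_mono[of _ UNIV] card_UNIV_eq by (metis finite)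
  also have "\<dots> \<le> card (Fq k) + card {x. poly S x = 0}"
    by (rule card_Un_le)
  also have "\<dots> \<le> card (Fq k) + (q ^ n - q ^ k)"
    using card_poly_roots_bound[OF \<open>S \<noteq> 0\<close>] \<open>degree S = _\<close> by simp
  finally show ?thesis
    using card_subfield_set_le[OF \<open>0 < k\<close>] \<open>q ^ k \<le> q ^ n\<close> by linarith
qed

lemma dvd_of_subfield_set_subset:
  assumes "card (Fq a) = q ^ a" "0 < a" "Fq a \<subseteq> Fq b"
  shows "a dvd b"
proof -
  have "Fq a = Fq (gcd a b)"
    using subfield_set_Int[of q a b, where 'a='a] Int_absorb2[OF assms(3)] by simp
  then have "q ^ a \<le> q ^ gcd a b"
    using assms(1,2) card_subfield_set_le[of "gcd a b"] by simp
  then have "a \<le> gcd a b"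
    using q_ge_2 by (intro power_le_imp_le_exp) auto
  moreover have "gcd a b \<le> a"
    using assms(2) by (simp add: gcd_le1_nat)
  ultimately have "gcd a b = a"
    by (rule antisym[rotated])
  then show ?thesis
    by (metis gcd_dvd2)
qed

lemma subfield_set_subset_iff:
  assumes "a dvd n"
  shows "Fq a \<subseteq> Fq b \<longleftrightarrow> a dvd b"
proof
  have "0 < a"
    using assms n_pos by (auto intro: Nat.gr0I)
  then show "Fq a \<subseteq> Fq b \<Longrightarrow> a dvd b"
    by (rule dvd_of_subfield_set_subset[OF card_subfield_set[OF assms]])
qed (rule subfield_set_mono)

lemma subfield_set_eq_iff: "a dvd n \<Longrightarrow> b dvd n \<Longrightarrow> Fq a = Fq b \<longleftrightarrow> a = b"
  by (metis dvd_antisym subfield_set_subset_iff subset_refl)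

lemma Fq_subspace_span_insert:
  fixes W :: "'a set"
  assumes "Fq_subspace q W"
  shows "Fq_subspace q (Fq_span_insert q v W)"
proof -
  note W = assms[unfolded is_subspace_over_def]
  show ?thesis
    unfolding is_subspace_over_def
  proof (intro conjI ballI)
    show "0 \<in> Fq_span_insert q v W"
      unfolding Fq_span_insert_iff using W zero_mem_subfield_set by force
  next
    fix x y assume "x \<in> Fq_span_insert q v W" "y \<in> Fq_span_insert q v W"
    then obtain w c w' c' where "x = w + c * v" "y = w' + c' * v"
      and "w \<in> W" "c \<in> Fq 1" "w' \<in> W" "c' \<in> Fq 1"
      unfolding Fq_span_insert_iff by blast
    then have "x + y = (w + w') + (c + c') * v" "w + w' \<in> W" "c + c' \<in> Fq 1"
      using W by (simp_all add: algebra_simps subfield_set_add_closed)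
    then show "x + y \<in> Fq_span_insert q v W"
      unfolding Fq_span_insert_iff by blast
  next
    fix x assume "x \<in> Fq_span_insert q v W"
    then obtain w c where "x = w + c * v" "w \<in> W" "c \<in> Fq 1"
      unfolding Fq_span_insert_iff by blast
    then have "- x = - w + (- c) * v" "- w \<in> W" "- c \<in> Fq 1"
      using W by (simp_all add: subfield_set_uminus_closed)
    then show "- x \<in> Fq_span_insert q v W"
      unfolding Fq_span_insert_iff by blast
  next
    fix a x assume "a \<in> Fq 1" "x \<in> Fq_span_insert q v W"
    then obtain w c where "x = w + c * v" "w \<in> W" "c \<in> Fq 1"
      unfolding Fq_span_insert_iff by blast
    then have "a * x = a * w + (a * c) * v" "a * w \<in> W" "a * c \<in> Fq 1"
      using W \<open>a \<in> Fq 1\<close> by (simp_all add: algebra_simps subfield_set_mult_closed)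
    then show "a * x \<in> Fq_span_insert q v W"
      unfolding Fq_span_insert_iff by blast
  qed
qed

lemma card_Fq_span_insert:
  fixes W :: "'a set"
  assumes "Fq_subspace q W" "v \<notin> W"
  shows "card (Fq_span_insert q v W) = card W * q"
proof -
  note W = assms(1)[unfolded is_subspace_over_def]
  have "inj_on (\<lambda>(w, c). w + c * v) (W \<times> Fq 1)"
  proof (rule inj_onI, clarify)
    fix w c w' c' assume *: "w \<in> W" "c \<in> Fq 1" "w' \<in> W" "c' \<in> Fq 1" "w + c * v = w' + c' * v"
    show "w = w' \<and> c = c'"
    proof (rule ccontr)
      assume "\<not> (w = w' \<and> c = c')"
      with *(5) have "c \<noteq> c'"
        by auto
      have "(c - c') * v = w' + - w"
        using *(5) by (simp add: algebra_simps)
      then have "v = inverse (c - c') * (w' + - w)"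
        using \<open>c \<noteq> c'\<close> by (simp add: field_simps)
      moreover have "inverse (c - c') \<in> Fq 1"
        using *(2,4) by (simp add: subfield_set_inverse_closed subfield_set_diff_closed)
      moreover have "w' + - w \<in> W"
        using W *(1,3) by blast
      ultimately have "v \<in> W"
        using W by metis
      with assms(2) show False ..
    qed
  qed
  then show ?thesis
    unfolding Fq_span_insert_def
    using card_subfield_set[of 1] by (simp add: card_image card_cartesian_product)
qed

lemma card_Fq_subspace:
  fixes V :: "'a set"
  assumes V: "Fq_subspace q V"
  shows "\<exists>d. card V = q ^ d"
proof -
  note V_closed = V[unfolded is_subspace_over_def]
  have "\<exists>k. card V = card W * q ^ k" if "Fq_subspace q W" "W \<subseteq> V" for W
    using that
  proof (induction "card V - card W" arbitrary: W rule: less_induct)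
    case less
    show ?case
    proof (cases "W = V")
      case False
      with less.prems(2) obtain v where v: "v \<in> V" "v \<notin> W"
        by blast
      define W' where "W' = Fq_span_insert q v W"
      have "W' \<subseteq> V"
        using less.prems(2) v(1) V_closed unfolding W'_def Fq_span_insert_def by auto
      moreover have "card W' = card W * q"
        unfolding W'_def using less.prems(1) v(2) by (rule card_Fq_span_insert)
      moreover have "0 < card W"
        using less.prems(1) unfolding is_subspace_over_def by (auto simp: card_gt_0_iff)
      moreover have "card W < card W * q"
        using \<open>0 < card W\<close> q_ge_2 by simp
      moreover have "card W' \<le> card V"
        using \<open>W' \<subseteq> V\<close> by (simp add: card_mono)
      ultimately have "card V - card W' < card V - card W"
        by linarith
      moreover have "Fq_subspace q W'"
        unfolding W'_def using less.prems(1) by (rule Fq_subspace_span_insert)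
      ultimately obtain k where "card V = card W' * q ^ k"
        using less.hyps \<open>W' \<subseteq> V\<close> by blast
      with \<open>card W' = card W * q\<close> show ?thesis
        by (intro exI[of _ "Suc k"]) simp
    qed (intro exI[of _ 0], simp)
  qed
  moreover have "Fq_subspace q {0}"
    by (simp add: is_subspace_over_def)
  ultimately obtain k where "card V = card {0::'a} * q ^ k"
    using V_closed by blast
  then show ?thesis
    by auto
qed

(* T is an F_q-space, so |T| = q^d; its elements satisfy x^|T| = x, so T lies in Fq d,
   which has at most q^d elements. *)
lemma Fq_subalgebra_eq_subfield_set:
  assumes "Fq_subalgebra q T"
  shows "\<exists>d. d dvd n \<and> T = Fq d"
proof -
  have Fq_1: "Fq 1 \<subseteq> T" and closed: "\<And>x y. x \<in> T \<Longrightarrow> y \<in> T \<Longrightarrow> x + y \<in> T \<and> x * y \<in> T"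
    using assms unfolding Fq_subalgebra_def by auto
  have "- 1 \<in> T"
    using Fq_1 subfield_set_uminus_closed[OF one_mem_subfield_set] by blast
  then have "Fq_subspace q T"
    unfolding is_subspace_over_def
    using Fq_1 closed zero_mem_subfield_set closed[of "- 1"] by (auto simp: subset_iff)
  then obtain d where d: "card T = q ^ d"
    using card_Fq_subspace by blast
  have "0 \<in> T" "1 \<in> T"
    using Fq_1 zero_mem_subfield_set one_mem_subfield_set by auto
  then have "card {0::'a, 1} \<le> card T"
    by (intro card_mono) auto
  then have "0 < d"
    using d by (cases d) auto
  have "T \<subseteq> Fq d"
    using power_card_eq_self[of T] \<open>0 \<in> T\<close> closed d by (auto simp: subfield_set_def)
  moreover have "card (Fq d) \<le> card T"
    using card_subfield_set_le[OF \<open>0 < d\<close>] d by simp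
  ultimately have "T = Fq d"
    by (rule card_seteq[rotated]) simp
  moreover have "d dvd n"
    using \<open>T = Fq d\<close> d \<open>0 < d\<close> subfield_set_n by (intro dvd_of_subfield_set_subset) auto
  ultimately show ?thesis
    by blast
qed

lemma Greatest_subfield_set_subset:
  assumes "Fq_subalgebra q T" "\<And>k. P k \<longleftrightarrow> k dvd n \<and> Fq k \<subseteq> T"
  shows "(GREATEST k. P k) dvd n \<and> T = Fq (GREATEST k. P k)"
proof -
  obtain d where d: "d dvd n" "T = Fq d"
    using Fq_subalgebra_eq_subfield_set[OF assms(1)] by blast
  have "(GREATEST k. P k) = d"
  proof (rule Greatest_equality)
    show "P d"
      using assms(2) d by simp
  next
    fix k assume "P k"
    then have "k dvd d"
      using assms(2) d(2) subfield_set_subset_iff by blast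
    moreover have "0 < d"
      using d(1) n_pos by (auto intro: Nat.gr0I)
    ultimately show "k \<le> d"
      by (rule dvd_imp_le)
  qed
  with d show ?thesis
    by simp
qed

lemma best_friend_subfield_set:
  assumes "Fq_subspace q U"
  shows "best_friend q n U dvd n \<and> stabilizer U = Fq (best_friend q n U)"
  unfolding best_friend_def
  using Fq_subalgebra_stabilizer[OF assms] friend_iff_subset_stabilizer[OF assms]
  by (rule Greatest_subfield_set_subset)

lemma flag_best_friend_subfield_set:
  assumes "F \<noteq> []" "\<And>U. U \<in> set F \<Longrightarrow> Fq_subspace q U"
  shows "flag_best_friend q n F dvd n \<and> flag_stabilizer F = Fq (flag_best_friend q n F)"
  unfolding flag_best_friend_def
  using Fq_subalgebra_flag_stabilizer[OF assms(2)] flag_friend_iff_subset_flag_stabilizer[OF assms]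
  by (rule Greatest_subfield_set_subset)

lemma disjoint_code_flag_mult_image_iff_best_friends:
  assumes "is_flag q F" "1 \<in> G" "0 \<notin> G" "\<And>g h. g \<in> G \<Longrightarrow> h \<in> G \<Longrightarrow> g / h \<in> G"
  shows "disjoint_code (length F) (flag_mult F ` G) \<longleftrightarrow>
    (\<forall>i<length F. G \<inter> Fq (best_friend q n (F ! i)) = G \<inter> Fq (flag_best_friend q n F))"
proof -
  have subspaces: "\<And>U. U \<in> set F \<Longrightarrow> Fq_subspace q U" and "F \<noteq> []"
    using is_flag_nonempty_subspaces[OF assms(1)] by auto
  have "G \<inter> stabilizer (F ! i) \<subseteq> flag_stabilizer F \<longleftrightarrow>
      G \<inter> Fq (best_friend q n (F ! i)) = G \<inter> Fq (flag_best_friend q n F)" if "i < length F" for i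
  proof -
    have "flag_stabilizer F \<subseteq> stabilizer (F ! i)"
      using that unfolding flag_stabilizer_def by auto
    moreover have "stabilizer (F ! i) = Fq (best_friend q n (F ! i))"
      using that subspaces best_friend_subfield_set by simp
    moreover have "flag_stabilizer F = Fq (flag_best_friend q n F)"
      using flag_best_friend_subfield_set[OF \<open>F \<noteq> []\<close> subspaces] by simp
    ultimately show ?thesis
      by blast
  qed
  then show ?thesis
    using disjoint_code_flag_mult_image_iff[OF assms(2-4)] by simp
qed

end

theorem proposition4p19:
  fixes q n m :: nat and F :: "'a::{field,finite} set list" and \<beta> :: 'a
  assumes "prime_power q"
    and "card (UNIV :: 'a set) = q ^ n"
    and "is_flag q F"
    and "m = flag_best_friend q n F"
    and "\<beta> \<noteq> 0"
  shows "(disjoint_code (length F) (Orb_beta \<beta> F) \<longleftrightarrow>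
           (\<forall>i<length F. cyclic_subgroup \<beta> \<inter> (subfield_set q (best_friend q n (F ! i)) - {0})
                          = cyclic_subgroup \<beta> \<inter> (subfield_set q m - {0})))
         \<and> (disjoint_code (length F) (Orb F) \<longleftrightarrow> (\<forall>i<length F. best_friend q n (F ! i) = m))"
proof -
  interpret finite_field_qn q n "TYPE('a)"
    using assms(1,2) by unfold_locales
  have "1 \<in> cyclic_subgroup \<beta>" "0 \<notin> cyclic_subgroup \<beta>"
    using assms(5) unfolding cyclic_subgroup_def by (auto intro: range_eqI[of _ _ 0])
  then have cyclic: "disjoint_code (length F) (Orb_beta \<beta> F) \<longleftrightarrow>
      (\<forall>i<length F. cyclic_subgroup \<beta> \<inter> Fq (best_friend q n (F ! i)) = cyclic_subgroup \<beta> \<inter> Fq m)"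
    unfolding Orb_beta_eq_image_cyclic_subgroup[OF assms(5)] assms(4)
    using assms(3) cyclic_subgroup_divide[OF assms(5)]
    by (intro disjoint_code_flag_mult_image_iff_best_friends)
  have "Orb F = flag_mult F ` (UNIV - {0})"
    unfolding Orb_def by auto
  then have full: "disjoint_code (length F) (Orb F) \<longleftrightarrow>
      (\<forall>i<length F. (UNIV - {0}) \<inter> Fq (best_friend q n (F ! i)) = (UNIV - {0}) \<inter> Fq m)"
    unfolding assms(4) using assms(3)
    by (simp only:) (intro disjoint_code_flag_mult_image_iff_best_friends, auto)
  have "m dvd n" "\<And>i. i < length F \<Longrightarrow> best_friend q n (F ! i) dvd n"
    using is_flag_nonempty_subspaces[OF assms(3)] assms(4)
      flag_best_friend_subfield_set best_friend_subfield_set by auto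
  then have "(UNIV - {0}) \<inter> Fq (best_friend q n (F ! i)) = (UNIV - {0}) \<inter> Fq m \<longleftrightarrow>
      best_friend q n (F ! i) = m" if "i < length F" for i
    using that zero_mem_subfield_set by (auto simp flip: subfield_set_eq_iff)
  with cyclic full show ?thesis
    using \<open>0 \<notin> cyclic_subgroup \<beta>\<close> by auto
qed

end
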